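(* Let $0<\delta<1$ and let $(f_n)_{n\ge1}$ be a sequence of Möbius transformations such that $f_n(\mathbb{D})\subset\mathbb{D}$ and $\operatorname{rad}(f_n(\mathbb{D}))<\delta$ for all $n$. Then $F_n=f_1\cdots f_n$ is a rapid-escape sequence.
   Context: $\mathbb{D}$ is the open unit disc; $\operatorname{rad}(D)$ is the Euclidean radius of a Euclidean disc $D$. $\mathbb{H}^3=\{(x,y,t)\in\mathbb{R}^3:t>0\}$ with the hyperbolic metric $\rho$ induced by the density $ds/t$; $\mathbb{C}$ is identified with the plane $t=0$, so $\overline{\mathbb{C}}$ is the ideal boundary, and Möbius transformations act on $\mathbb{H}^3$ by their Poincaré extensions (as hyperbolic isometries). Let $j=(0,0,1)$. A sequence of Möbius transformations $(F_n)$ is escaping if $\rho(j,F_n(j))\to\infty$, and is a rapid-escape sequence if it is escaping and $\sum_n\exp(-\rho(j,F_n(j)))<+\infty$. *)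

theory Defs
  imports "HOL-Analysis.Analysis"
begin

text \<open>A Moebius transformation is represented by a nonsingular complex 2x2 matrix
  A = (a b; c d), acting by z \<mapsto> (a z + b)/(c z + d). Composition corresponds to
  the matrix product.\<close>

type_synonym mob = "complex^2^2"

definition is_mobius :: "mob \<Rightarrow> bool" where
  "is_mobius A \<longleftrightarrow> det A \<noteq> 0"

definition mob_app :: "mob \<Rightarrow> complex \<Rightarrow> complex" where
  "mob_app A z = (A$1$1 * z + A$1$2) / (A$2$1 * z + A$2$2)"

definition maps_disc_into_disc :: "mob \<Rightarrow> bool" where
  "maps_disc_into_disc A \<longleftrightarrow>
     (\<forall>z\<in>ball (0::complex) 1. A$2$1 * z + A$2$2 \<noteq> 0 \<and> mob_app A z \<in> ball 0 1)"

definition disc_rad :: "complex set \<Rightarrow> real" where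
  "disc_rad S = (THE r. \<exists>c. S = ball c r)"

text \<open>Upper half-space model H^3: points (z,t) with z complex, t > 0.
  Hyperbolic distance for the metric ds/t.\<close>
definition hyp_dist :: "complex \<times> real \<Rightarrow> complex \<times> real \<Rightarrow> real" where
  "hyp_dist p q = arcosh (1 + ((cmod (fst p - fst q))\<^sup>2 + (snd p - snd q)\<^sup>2)
                                 / (2 * snd p * snd q))"

text \<open>Poincare extension of the Moebius map A to H^3 (quaternion formula
  (aq+b)(cq+d)^{-1}, normalised for arbitrary nonzero determinant).\<close>
definition poincare_ext :: "mob \<Rightarrow> complex \<times> real \<Rightarrow> complex \<times> real" where
  "poincare_ext A p =
     (let z = fst p; t = snd p; a = A$1$1; b = A$1$2; c = A$2$1; d = A$2$2;
          D = (cmod (c * z + d))\<^sup>2 + (cmod c)\<^sup>2 * t\<^sup>2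
      in (((a * z + b) * cnj (c * z + d) + a * cnj c * complex_of_real (t\<^sup>2)) / complex_of_real D,
          t * cmod (det A) / D))"

definition jpt :: "complex \<times> real" where "jpt = (0, 1)"

definition escaping :: "(nat \<Rightarrow> mob) \<Rightarrow> bool" where
  "escaping F \<longleftrightarrow> filterlim (\<lambda>n. hyp_dist jpt (poincare_ext (F n) jpt)) at_top sequentially"

definition rapid_escape :: "(nat \<Rightarrow> mob) \<Rightarrow> bool" where
  "rapid_escape F \<longleftrightarrow> escaping F \<and>
     summable (\<lambda>n. exp (- hyp_dist jpt (poincare_ext (F n) jpt)))"

fun comp_prod :: "(nat \<Rightarrow> mob) \<Rightarrow> nat \<Rightarrow> mob" where
  "comp_prod f 0 = mat 1"
| "comp_prod f (Suc n) = comp_prod f n ** f (Suc n)"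

end

(* Let c_n, d_n be the bottom row of the matrix F_n. As long as |c_n| < |d_n|, F_n maps
   the unit disc D onto a Euclidean disc of radius R_n = |det F_n| / (|d_n|^2 - |c_n|^2), while
   F_n(j) has height h_n = |det F_n| / (|c_n|^2 + |d_n|^2) and exp (- rho(j, F_n(j))) <= 2 h_n.
   Since F_(n+1)(D) is the image under F_n of the disc f_(n+1)(D), which lies in D and has
   radius r < delta, an explicit computation of its radius gives
   h_n <= 2 / (1 - delta) * (R_n - R_(n+1)): the shrinking factor 1 - r of f_(n+1)(D) inside D
   forces the radius to drop by a definite fraction of the height. The sum of the h_n therefore
   telescopes and is bounded by a multiple of R_0. *)

theory Submission
  imports Defs
begin

definition mob_disc_gap :: "mob \<Rightarrow> real" where
  "mob_disc_gap M = (cmod (M$2$2))\<^sup>2 - (cmod (M$2$1))\<^sup>2"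

definition mob_disc_centre :: "mob \<Rightarrow> complex" where
  "mob_disc_centre M =
     (M$1$2 * cnj (M$2$2) - M$1$1 * cnj (M$2$1)) / complex_of_real (mob_disc_gap M)"

definition mob_disc_radius :: "mob \<Rightarrow> real" where
  "mob_disc_radius M = cmod (det M) / mob_disc_gap M"

lemma mob_disc_gap_pos_iff: "0 < mob_disc_gap M \<longleftrightarrow> cmod (M$2$1) < cmod (M$2$2)"
  unfolding mob_disc_gap_def by (simp flip: not_le)

lemma of_real_mob_disc_gap:
  "complex_of_real (mob_disc_gap M) = M$2$2 * cnj (M$2$2) - M$2$1 * cnj (M$2$1)"
  by (simp only: mob_disc_gap_def of_real_diff complex_norm_square)

lemma mob_disc_radius_pos:
  assumes "det M \<noteq> 0" "0 < mob_disc_gap M"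
  shows "0 < mob_disc_radius M"
  using assms by (simp add: mob_disc_radius_def)

lemma cmod_square_diff_conj_affine:
  "(cmod (c*z + d))\<^sup>2 - (cmod (cnj d * z + cnj c))\<^sup>2
     = ((cmod d)\<^sup>2 - (cmod c)\<^sup>2) * (1 - (cmod z)\<^sup>2)"
proof -
  have "complex_of_real ((cmod (c*z + d))\<^sup>2 - (cmod (cnj d * z + cnj c))\<^sup>2)
      = complex_of_real (((cmod d)\<^sup>2 - (cmod c)\<^sup>2) * (1 - (cmod z)\<^sup>2))"
    by (simp only: of_real_diff of_real_mult of_real_1 complex_norm_square complex_cnj_add
        complex_cnj_mult complex_cnj_cnj) (simp add: algebra_simps)
  then show ?thesis
    using of_real_eq_iff by blast
qed

lemma of_real_mob_disc_gap_nonzero: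
  "0 < mob_disc_gap M \<Longrightarrow> M$2$2 * cnj (M$2$2) - M$2$1 * cnj (M$2$1) \<noteq> 0"
  by (metis of_real_mob_disc_gap of_real_eq_0_iff order_less_irrefl)

lemma mob_app_minus_centre:
  assumes "0 < mob_disc_gap M" "M$2$1 * z + M$2$2 \<noteq> 0"
  shows "mob_app M z - mob_disc_centre M
    = det M * (cnj (M$2$2) * z + cnj (M$2$1)) / (complex_of_real (mob_disc_gap M) * (M$2$1 * z + M$2$2))"
  using assms of_real_mob_disc_gap_nonzero[OF assms(1)]
  unfolding mob_app_def mob_disc_centre_def det_2 of_real_mob_disc_gap
  by (simp add: field_simps)

lemma dist_mob_app_centre:
  assumes "0 < mob_disc_gap M" "M$2$1 * z + M$2$2 \<noteq> 0"
  shows "dist (mob_app M z) (mob_disc_centre M)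
    = mob_disc_radius M * (cmod (cnj (M$2$2) * z + cnj (M$2$1)) / cmod (M$2$1 * z + M$2$2))"
  using assms by (simp add: dist_norm mob_app_minus_centre norm_mult norm_divide mob_disc_radius_def)

lemma dist_mob_app_centre_less_iff:
  assumes "det M \<noteq> 0" "0 < mob_disc_gap M" "M$2$1 * z + M$2$2 \<noteq> 0"
  shows "dist (mob_app M z) (mob_disc_centre M) < mob_disc_radius M \<longleftrightarrow> cmod z < 1"
proof -
  let ?num = "cmod (cnj (M$2$2) * z + cnj (M$2$1))" and ?den = "cmod (M$2$1 * z + M$2$2)"
  have "dist (mob_app M z) (mob_disc_centre M) < mob_disc_radius M \<longleftrightarrow> ?num < ?den"
    using assms mob_disc_radius_pos[OF assms(1,2)]
    by (simp add: dist_mob_app_centre divide_less_eq)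
  also have "\<dots> \<longleftrightarrow> 0 < ?den\<^sup>2 - ?num\<^sup>2"
    by (simp flip: not_le)
  also have "\<dots> \<longleftrightarrow> 0 < mob_disc_gap M * (1 - (cmod z)\<^sup>2)"
    by (simp add: cmod_square_diff_conj_affine mob_disc_gap_def)
  also have "\<dots> \<longleftrightarrow> cmod z < 1"
    using assms(2) by (simp add: zero_less_mult_iff power_less_one_iff abs_square_less_1)
  finally show ?thesis .
qed

lemma dist_pole_image_centre:
  assumes "0 < mob_disc_gap M" "M$2$1 \<noteq> 0"
  shows "dist (M$1$1 / M$2$1) (mob_disc_centre M)
    = mob_disc_radius M * (cmod (M$2$2) / cmod (M$2$1))"
proof -
  have "M$1$1 / M$2$1 - mob_disc_centre M
      = det M * cnj (M$2$2) / (complex_of_real (mob_disc_gap M) * M$2$1)"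
    using assms of_real_mob_disc_gap_nonzero[OF assms(1)]
    unfolding mob_disc_centre_def det_2 of_real_mob_disc_gap
    by (simp add: field_simps)
  then show ?thesis
    using assms by (simp add: dist_norm norm_mult norm_divide mob_disc_radius_def)
qed

lemma mob_denominator_nonzero:
  assumes "0 < mob_disc_gap M" "cmod z \<le> 1"
  shows "M$2$1 * z + M$2$2 \<noteq> 0"
proof
  assume "M$2$1 * z + M$2$2 = 0"
  then have "cmod (M$2$2) = cmod (M$2$1) * cmod z"
    by (metis add_eq_0_iff norm_minus_cancel norm_mult)
  also have "\<dots> \<le> cmod (M$2$1)"
    using assms(2) by (simp add: mult_left_le)
  finally show False
    using assms(1) by (simp add: mob_disc_gap_pos_iff)
qed

lemma mob_inverse_denominator_nonzero:
  assumes det: "det M \<noteq> 0" and gap: "0 < mob_disc_gap M"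
    and w: "dist w (mob_disc_centre M) < mob_disc_radius M"
  shows "M$1$1 - M$2$1 * w \<noteq> 0"
proof
  assume pole: "M$1$1 - M$2$1 * w = 0"
  show False
  proof (cases "M$2$1 = 0")
    case True
    then show False
      using pole det by (simp add: det_2)
  next
    case False
    then have "w = M$1$1 / M$2$1"
      using pole by (simp add: field_simps)
    moreover have "mob_disc_radius M \<le> mob_disc_radius M * (cmod (M$2$2) / cmod (M$2$1))"
      using False gap mob_disc_radius_pos[OF det gap]
      by (simp add: mob_disc_gap_pos_iff le_divide_eq)
    ultimately show False
      using w dist_pole_image_centre[OF gap False] by simp
  qed
qed

lemma mob_app_inverse:
  assumes det: "det M \<noteq> 0" and nonpole: "M$1$1 - M$2$1 * w \<noteq> 0"
  defines "z \<equiv> (M$2$2 * w - M$1$2) / (M$1$1 - M$2$1 * w)"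
  shows "M$2$1 * z + M$2$2 \<noteq> 0" and "mob_app M z = w"
proof -
  have den: "M$2$1 * z + M$2$2 = det M / (M$1$1 - M$2$1 * w)"
    using nonpole unfolding z_def det_2 by (simp add: field_simps)
  then show den_nonzero: "M$2$1 * z + M$2$2 \<noteq> 0"
    using det nonpole by simp
  have "M$1$1 * z + M$1$2 = w * (det M / (M$1$1 - M$2$1 * w))"
    using nonpole unfolding z_def det_2 by (simp add: field_simps)
  then show "mob_app M z = w"
    using den den_nonzero by (simp add: mob_app_def)
qed

lemma mob_app_ball:
  assumes det: "det M \<noteq> 0" and gap: "0 < mob_disc_gap M"
  shows "mob_app M ` ball 0 1 = ball (mob_disc_centre M) (mob_disc_radius M)"
proof (intro subset_antisym image_subsetI subsetI)
  fix z :: complex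
  assume "z \<in> ball 0 1"
  then have "cmod z < 1"
    by simp
  with gap have "M$2$1 * z + M$2$2 \<noteq> 0"
    by (simp add: mob_denominator_nonzero)
  with \<open>cmod z < 1\<close> show "mob_app M z \<in> ball (mob_disc_centre M) (mob_disc_radius M)"
    using dist_mob_app_centre_less_iff[OF det gap] by (simp add: dist_commute)
next
  fix w
  assume "w \<in> ball (mob_disc_centre M) (mob_disc_radius M)"
  then have w: "dist w (mob_disc_centre M) < mob_disc_radius M"
    by (simp add: dist_commute)
  note inverse = mob_app_inverse[OF det mob_inverse_denominator_nonzero[OF det gap w]]
  then have "cmod ((M$2$2 * w - M$1$2) / (M$1$1 - M$2$1 * w)) < 1"
    using w dist_mob_app_centre_less_iff[OF det gap inverse(1)] by simp
  with inverse(2) show "w \<in> mob_app M ` ball 0 1"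
    by force
qed

lemma exists_pos_less_one_mult_le:
  fixes K A :: real
  assumes "0 < K" "0 \<le> A"
  shows "\<exists>e. 0 < e \<and> e < 1 \<and> e * A \<le> K"
proof (intro exI conjI)
  have "K * A \<le> K * (K + A + 1)"
    using assms by (intro mult_left_mono) auto
  then show "0 < K / (K + A + 1)" "K / (K + A + 1) < 1" "K / (K + A + 1) * A \<le> K"
    using assms by (simp_all add: field_simps)
qed

lemma exists_disc_point_near_pole:
  fixes a b c d :: complex
  assumes det: "a * d - b * c \<noteq> 0" and "c \<noteq> 0" and dc: "cmod d \<le> cmod c"
  shows "\<exists>z. cmod z < 1 \<and> cmod (c * z + d) \<le> cmod (a * z + b)"
proof -
  define K where "K = cmod (a * d - b * c) / cmod c"
  have "0 < K"
    using det \<open>c \<noteq> 0\<close> by (simp add: K_def)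
  then obtain e where e: "0 < e" "e < 1" "e * (cmod a + cmod d) \<le> K"
    using exists_pos_less_one_mult_le[of K "cmod a + cmod d"] by auto
  (* the pole -d/c lies in the closed disc; move slightly towards 0 *)
  define z where "z = complex_of_real (1 - e) * (- d / c)"
  have dc': "cmod d / cmod c \<le> 1"
    using dc \<open>c \<noteq> 0\<close> by simp
  have "cmod z = (1 - e) * (cmod d / cmod c)"
    using e by (simp add: z_def norm_mult norm_divide del: of_real_diff)
  also have "\<dots> \<le> 1 - e"
    using e dc' by (intro mult_left_le) auto
  finally have "cmod z < 1"
    using e by linarith
  have az: "- (a * d - b * c) / c = (a * z + b) - e * (a * d / c)"
    using \<open>c \<noteq> 0\<close> by (simp add: z_def field_simps)
  have "cmod (e * (a * d / c)) = e * cmod a * (cmod d / cmod c)"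
    using e by (simp add: norm_mult norm_divide)
  also have "\<dots> \<le> e * cmod a"
    using e dc' by (intro mult_left_le) auto
  finally have small: "cmod (e * (a * d / c)) \<le> e * cmod a" .
  have "K = cmod (- (a * d - b * c) / c)"
    by (simp add: K_def norm_divide norm_minus_commute)
  also have "\<dots> \<le> cmod (a * z + b) + cmod (e * (a * d / c))"
    unfolding az by (rule norm_triangle_ineq4)
  finally have "K \<le> cmod (a * z + b) + e * cmod a"
    using small by linarith
  moreover have "c * z + d = e * d"
    using \<open>c \<noteq> 0\<close> by (simp add: z_def field_simps)
  then have "cmod (c * z + d) = e * cmod d"
    using e by (simp add: norm_mult)
  ultimately have "cmod (c * z + d) \<le> cmod (a * z + b)"
    using e(3) by (simp add: algebra_simps)
  with \<open>cmod z < 1\<close> show ?thesis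
    by blast
qed

lemma maps_disc_into_disc_gap_pos:
  assumes mob: "is_mobius M" and into: "maps_disc_into_disc M"
  shows "0 < mob_disc_gap M"
proof (rule ccontr)
  define a b c d where "a = M$1$1" "b = M$1$2" "c = M$2$1" "d = M$2$2"
  assume "\<not> 0 < mob_disc_gap M"
  then have dc: "cmod d \<le> cmod c"
    by (simp add: mob_disc_gap_pos_iff a_b_c_d_def)
  have det: "a * d - b * c \<noteq> 0"
    using mob by (simp add: is_mobius_def det_2 a_b_c_d_def)
  then have "c \<noteq> 0"
    using dc by auto
  then obtain z where "cmod z < 1" "cmod (c * z + d) \<le> cmod (a * z + b)"
    using exists_disc_point_near_pole[OF det _ dc] by blast
  moreover have "c * z + d \<noteq> 0" "cmod ((a * z + b) / (c * z + d)) < 1"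
    using into \<open>cmod z < 1\<close>
    by (auto simp: maps_disc_into_disc_def mob_app_def a_b_c_d_def)
  ultimately show False
    by (simp add: norm_divide divide_less_eq)
qed

lemma disc_rad_ball: "0 < r \<Longrightarrow> disc_rad (ball c r) = r"
  unfolding disc_rad_def by (rule the_equality) (auto simp: ball_eq_ball_iff)

lemma maps_disc_into_disc_image:
  assumes "is_mobius M" "maps_disc_into_disc M"
  shows "disc_rad (mob_app M ` ball 0 1) = mob_disc_radius M"
    and "cmod (mob_disc_centre M) + mob_disc_radius M \<le> 1"
proof -
  have det: "det M \<noteq> 0" and gap: "0 < mob_disc_gap M"
    using assms maps_disc_into_disc_gap_pos by (auto simp: is_mobius_def)
  note image = mob_app_ball[OF det gap] and radius = mob_disc_radius_pos[OF det gap]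
  then show "disc_rad (mob_app M ` ball 0 1) = mob_disc_radius M"
    by (simp add: disc_rad_ball)
  have "ball (mob_disc_centre M) (mob_disc_radius M) \<subseteq> ball 0 1"
    using assms(2) unfolding image[symmetric] maps_disc_into_disc_def by auto
  then show "cmod (mob_disc_centre M) + mob_disc_radius M \<le> 1"
    using radius by (simp add: ball_subset_ball_iff dist_norm)
qed

lemma matrix_mult_2_row2:
  fixes A B :: "'a::semiring_1^2^2"
  shows "(A ** B)$2$1 = A$2$1 * B$1$1 + A$2$2 * B$2$1"
    and "(A ** B)$2$2 = A$2$1 * B$1$2 + A$2$2 * B$2$2"
  by (simp_all add: matrix_matrix_mult_def sum_2)

lemma norm_square_diff_row_identity:
  fixes a b c d x y :: complex
  shows "((cmod d)\<^sup>2 - (cmod c)\<^sup>2) * ((cmod (x*b + y*d))\<^sup>2 - (cmod (x*a + y*c))\<^sup>2)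
    = (cmod (y * of_real ((cmod d)\<^sup>2 - (cmod c)\<^sup>2) + x * (b * cnj d - a * cnj c)))\<^sup>2
      - (cmod (a*d - b*c))\<^sup>2 * (cmod x)\<^sup>2"
proof -
  have "complex_of_real (((cmod d)\<^sup>2 - (cmod c)\<^sup>2) * ((cmod (x*b + y*d))\<^sup>2 - (cmod (x*a + y*c))\<^sup>2))
      = complex_of_real ((cmod (y * of_real ((cmod d)\<^sup>2 - (cmod c)\<^sup>2) + x * (b * cnj d - a * cnj c)))\<^sup>2
          - (cmod (a*d - b*c))\<^sup>2 * (cmod x)\<^sup>2)"
    by (simp only: of_real_diff of_real_mult complex_norm_square complex_cnj_add complex_cnj_mult
        complex_cnj_diff complex_cnj_cnj complex_cnj_complex_of_real) (simp add: algebra_simps)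
  then show ?thesis
    using of_real_eq_iff by blast
qed

text \<open>The bracket is the gap of G composed with the affine map z \<mapsto> centre + radius * z,
  which maps D onto M(D).\<close>
lemma mob_disc_gap_mult:
  assumes "0 < mob_disc_gap M"
  shows "mob_disc_gap (G ** M) = mob_disc_gap M *
    ((cmod (G$2$2 + G$2$1 * mob_disc_centre M))\<^sup>2 - (mob_disc_radius M)\<^sup>2 * (cmod (G$2$1))\<^sup>2)"
proof -
  let ?q = "mob_disc_gap M" and ?W = "cmod (G$2$2 + G$2$1 * mob_disc_centre M)"
  have "G$2$2 * of_real ?q + G$2$1 * (M$1$2 * cnj (M$2$2) - M$1$1 * cnj (M$2$1))
      = of_real ?q * (G$2$2 + G$2$1 * mob_disc_centre M)"
    using assms by (simp add: mob_disc_centre_def field_simps)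
  then have W: "cmod (G$2$2 * of_real ?q + G$2$1 * (M$1$2 * cnj (M$2$2) - M$1$1 * cnj (M$2$1)))
      = ?q * ?W"
    using assms by (simp add: norm_mult)
  have r: "cmod (det M) = ?q * mob_disc_radius M"
    using assms by (simp add: mob_disc_radius_def)
  have "?q * mob_disc_gap (G ** M)
      = (cmod (G$2$2 * of_real ?q + G$2$1 * (M$1$2 * cnj (M$2$2) - M$1$1 * cnj (M$2$1))))\<^sup>2
        - (cmod (det M))\<^sup>2 * (cmod (G$2$1))\<^sup>2"
    unfolding mob_disc_gap_def matrix_mult_2_row2 det_2 by (rule norm_square_diff_row_identity)
  also have "\<dots> = ?q * (?q * (?W\<^sup>2 - (mob_disc_radius M)\<^sup>2 * (cmod (G$2$1))\<^sup>2))"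
    unfolding W r by (simp add: power_mult_distrib power2_eq_square algebra_simps)
  finally show ?thesis
    using assms by simp
qed

lemma mob_disc_radius_mult:
  assumes "0 < mob_disc_gap M"
  shows "mob_disc_radius (G ** M) = cmod (det G) * mob_disc_radius M /
    ((cmod (G$2$2 + G$2$1 * mob_disc_centre M))\<^sup>2 - (mob_disc_radius M)\<^sup>2 * (cmod (G$2$1))\<^sup>2)"
  using assms by (simp add: mob_disc_radius_def mob_disc_gap_mult det_mul norm_mult)

lemma affine_gap_lower_bound:
  fixes x y r W :: real
  assumes x: "0 \<le> x" "x < y" and r: "0 \<le> r" and W: "y - (1 - r) * x \<le> W"
  shows "(y - x) * (y - x + 2 * x * r) \<le> W\<^sup>2 - r\<^sup>2 * x\<^sup>2"
proof -
  have "0 \<le> x * r"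
    using x r by simp
  then have "0 \<le> y - (1 - r) * x"
    using x by (simp add: algebra_simps)
  then have "(y - (1 - r) * x)\<^sup>2 \<le> W\<^sup>2"
    using W by (intro power_mono) auto
  then show ?thesis
    by (simp add: power2_eq_square algebra_simps)
qed

lemma affine_gap_partial_fractions:
  fixes x y r :: real
  assumes "0 \<le> x" "x < y" "0 \<le> r"
  shows "(1 - r) / ((y + x) * (y - x + 2 * x * r))
    = 1 / (y\<^sup>2 - x\<^sup>2) - r / ((y - x) * (y - x + 2 * x * r))"
proof -
  define a b c where "a = y - x" and "b = y + x" and "c = y - x + 2 * x * r"
  have "0 \<le> 2 * x * r"
    using assms by simp
  then have "0 < c"
    using assms(2) unfolding c_def by linarith
  then have nonzero: "a \<noteq> 0" "b \<noteq> 0" "c \<noteq> 0"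
    using assms by (auto simp: a_def b_def)
  have "1 / (a * b) - r / (a * c) = (c - r * b) / (a * (b * c))"
    using nonzero by (simp add: field_simps)
  also have "c - r * b = a * (1 - r)"
    by (simp add: a_def b_def c_def algebra_simps)
  also have "a * (1 - r) / (a * (b * c)) = (1 - r) / (b * c)"
    using nonzero by simp
  finally show ?thesis
    by (simp add: a_def b_def c_def power2_eq_square algebra_simps)
qed

text \<open>Here x, y are the moduli of the bottom row of G, and r and W = |G$2$2 + G$2$1 * centre|
  come from the disc M(D); multiplied by |det G|, the conclusion is
  height(G) \<le> 2/(1-\<delta>) (radius(G) - radius(G M)).\<close>
lemma radius_decrement_inequality:
  fixes x y r W \<delta> :: real
  assumes x: "0 \<le> x" "x < y" and r: "0 < r" "r < \<delta>" "\<delta> < 1"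
    and W: "y - (1 - r) * x \<le> W"
  shows "1 / (x\<^sup>2 + y\<^sup>2) \<le> 2 / (1 - \<delta>) * (1 / (y\<^sup>2 - x\<^sup>2) - r / (W\<^sup>2 - r\<^sup>2 * x\<^sup>2))"
proof -
  let ?P = "(y - x) * (y - x + 2 * x * r)" and ?Q = "(y + x) * (y - x + 2 * x * r)"
  have P: "?P \<le> W\<^sup>2 - r\<^sup>2 * x\<^sup>2"
    using x r W by (intro affine_gap_lower_bound) auto
  have "x * r \<le> x" "0 \<le> 2 * x * r"
    using x r by (auto intro: mult_left_le)
  then have P_pos: "0 < ?P" and Q_pos: "0 < ?Q"
    using x by (intro mult_pos_pos; linarith)+
  have "?Q \<le> (y + x) * (y + x)"
    using x \<open>x * r \<le> x\<close> by (intro mult_left_mono) auto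
  also have "\<dots> \<le> 2 * (x\<^sup>2 + y\<^sup>2)"
    using zero_le_power2[of "y - x"] by (simp add: power2_eq_square algebra_simps)
  finally have "1 / (x\<^sup>2 + y\<^sup>2) \<le> 2 / ?Q"
    using Q_pos by (simp add: divide_simps)
  also have "\<dots> \<le> (1 - r) / (1 - \<delta>) * (2 / ?Q)"
    using r Q_pos mult_right_mono[of 1 "(1 - r) / (1 - \<delta>)" "2 / ?Q"] by simp
  also have "\<dots> = 2 / (1 - \<delta>) * ((1 - r) / ?Q)"
    by (simp add: times_divide_times_eq mult.commute)
  also have "\<dots> = 2 / (1 - \<delta>) * (1 / (y\<^sup>2 - x\<^sup>2) - r / ?P)"
    using x r by (simp add: affine_gap_partial_fractions)
  also have "\<dots> \<le> 2 / (1 - \<delta>) * (1 / (y\<^sup>2 - x\<^sup>2) - r / (W\<^sup>2 - r\<^sup>2 * x\<^sup>2))"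
    using r P P_pos by (intro mult_left_mono diff_left_mono divide_left_mono) auto
  finally show ?thesis .
qed

lemma norm_add_mult_mob_disc_centre_ge:
  assumes "is_mobius M" "maps_disc_into_disc M"
  shows "cmod (G$2$2) - (1 - mob_disc_radius M) * cmod (G$2$1)
    \<le> cmod (G$2$2 + G$2$1 * mob_disc_centre M)"
proof -
  have "cmod (G$2$1) * cmod (mob_disc_centre M) \<le> cmod (G$2$1) * (1 - mob_disc_radius M)"
    using maps_disc_into_disc_image(2)[OF assms] by (intro mult_left_mono) auto
  then show ?thesis
    using norm_diff_ineq[of "G$2$2" "G$2$1 * mob_disc_centre M"]
    by (simp add: norm_mult algebra_simps)
qed

lemma mob_disc_gap_mult_pos:
  assumes G: "0 < mob_disc_gap G" and M: "is_mobius M" "maps_disc_into_disc M"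
  shows "0 < mob_disc_gap (G ** M)"
proof -
  let ?x = "cmod (G$2$1)" and ?y = "cmod (G$2$2)" and ?r = "mob_disc_radius M"
  have gap: "0 < mob_disc_gap M"
    using M by (rule maps_disc_into_disc_gap_pos)
  have "0 < ?r"
    using M gap by (auto simp: is_mobius_def intro: mob_disc_radius_pos)
  have "?x < ?y"
    using G by (simp add: mob_disc_gap_pos_iff)
  then have "0 < (?y - ?x) * (?y - ?x + 2 * ?x * ?r)"
    using \<open>0 < ?r\<close> by (intro mult_pos_pos) (auto intro: add_pos_nonneg)
  also have "\<dots> \<le> (cmod (G$2$2 + G$2$1 * mob_disc_centre M))\<^sup>2 - ?r\<^sup>2 * ?x\<^sup>2"
    using \<open>?x < ?y\<close> \<open>0 < ?r\<close> norm_add_mult_mob_disc_centre_ge[OF M]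
    by (intro affine_gap_lower_bound) auto
  finally show ?thesis
    using gap by (simp add: mob_disc_gap_mult)
qed

lemma snd_poincare_ext_jpt:
  "snd (poincare_ext G jpt) = cmod (det G) / ((cmod (G$2$1))\<^sup>2 + (cmod (G$2$2))\<^sup>2)"
  by (simp add: poincare_ext_def jpt_def Let_def add.commute)

lemma snd_poincare_ext_jpt_pos:
  assumes "det G \<noteq> 0"
  shows "0 < snd (poincare_ext G jpt)"
proof -
  have "G$2$1 \<noteq> 0 \<or> G$2$2 \<noteq> 0"
    using assms by (auto simp: det_2)
  then have "0 < (cmod (G$2$1))\<^sup>2 + (cmod (G$2$2))\<^sup>2"
    by (auto intro: add_pos_nonneg add_nonneg_pos)
  with assms show ?thesis
    by (simp add: snd_poincare_ext_jpt)
qed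

lemma height_le_radius_decrement:
  assumes G: "0 < mob_disc_gap G"
    and M: "is_mobius M" "maps_disc_into_disc M" "disc_rad (mob_app M ` ball 0 1) < \<delta>"
    and "\<delta> < 1"
  shows "snd (poincare_ext G jpt)
    \<le> 2 / (1 - \<delta>) * mob_disc_radius G - 2 / (1 - \<delta>) * mob_disc_radius (G ** M)"
proof -
  let ?x = "cmod (G$2$1)" and ?y = "cmod (G$2$2)" and ?r = "mob_disc_radius M"
    and ?W = "cmod (G$2$2 + G$2$1 * mob_disc_centre M)"
  have gap: "0 < mob_disc_gap M"
    using M(1,2) by (rule maps_disc_into_disc_gap_pos)
  have r: "0 < ?r" "?r < \<delta>"
    using M gap maps_disc_into_disc_image(1)[OF M(1,2)]
    by (auto simp: is_mobius_def intro: mob_disc_radius_pos)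
  have "?x < ?y"
    using G by (simp add: mob_disc_gap_pos_iff)
  have "snd (poincare_ext G jpt) = cmod (det G) * (1 / (?x\<^sup>2 + ?y\<^sup>2))"
    by (simp add: snd_poincare_ext_jpt)
  also have "\<dots> \<le> cmod (det G) * (2 / (1 - \<delta>) * (1 / (?y\<^sup>2 - ?x\<^sup>2) - ?r / (?W\<^sup>2 - ?r\<^sup>2 * ?x\<^sup>2)))"
    using \<open>?x < ?y\<close> r \<open>\<delta> < 1\<close> norm_add_mult_mob_disc_centre_ge[OF M(1,2)]
    by (intro mult_left_mono radius_decrement_inequality) auto
  also have "\<dots> = 2 / (1 - \<delta>) * mob_disc_radius G - 2 / (1 - \<delta>) * mob_disc_radius (G ** M)"
    unfolding mob_disc_radius_mult[OF gap] mob_disc_radius_def[of G] mob_disc_gap_def[of G]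
    by (simp add: right_diff_distrib mult_ac)
  finally show ?thesis .
qed

lemma comp_prod_det_gap:
  assumes "\<And>n. n \<ge> 1 \<Longrightarrow> is_mobius (f n)" "\<And>n. n \<ge> 1 \<Longrightarrow> maps_disc_into_disc (f n)"
  shows "det (comp_prod f n) \<noteq> 0 \<and> 0 < mob_disc_gap (comp_prod f n)"
proof (induction n)
  case 0
  then show ?case
    by (simp add: mob_disc_gap_def mat_def det_I[unfolded mat_def])
next
  case (Suc n)
  then show ?case
    using assms[of "Suc n"] mob_disc_gap_mult_pos by (simp add: det_mul is_mobius_def)
qed

lemma exp_neg_arcosh_le:
  fixes X :: real
  assumes "1 \<le> X"
  shows "exp (- arcosh X) \<le> 1 / X"
proof -
  have "0 \<le> sqrt (X\<^sup>2 - 1)"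
    using assms by (simp add: one_le_power)
  with assms have "ln X \<le> ln (X + sqrt (X\<^sup>2 - 1))"
    by (subst ln_le_cancel_iff) linarith+
  then have "ln X \<le> arcosh X"
    using assms by (simp add: arcosh_real_def)
  then have "exp (- arcosh X) \<le> exp (- ln X)"
    by simp
  also have "exp (- ln X) = 1 / X"
    using assms by (simp add: exp_minus inverse_eq_divide)
  finally show ?thesis .
qed

lemma exp_neg_hyp_dist_jpt_le:
  assumes "0 < snd p"
  shows "exp (- hyp_dist jpt p) \<le> 2 * snd p"
proof -
  obtain w h where p: "p = (w, h)"
    by fastforce
  define X where "X = 1 + ((cmod w)\<^sup>2 + (1 - h)\<^sup>2) / (2 * h)"
  have h: "0 < h"
    using assms p by simp
  have "1 / (2 * h) \<le> (1 + h\<^sup>2) / (2 * h)"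
    using h by (intro divide_right_mono) auto
  also have "\<dots> = 1 + (1 - h)\<^sup>2 / (2 * h)"
    using h by (simp add: field_simps power2_eq_square)
  also have "\<dots> \<le> X"
    using h by (simp add: X_def divide_right_mono)
  finally have X: "1 / (2 * h) \<le> X" .
  have "1 \<le> X"
    using h by (simp add: X_def)
  have "exp (- hyp_dist jpt p) = exp (- arcosh X)"
    by (simp add: p hyp_dist_def jpt_def X_def)
  also have "\<dots> \<le> 1 / X"
    using \<open>1 \<le> X\<close> by (rule exp_neg_arcosh_le)
  also have "\<dots> \<le> 2 * h"
    using X h \<open>1 \<le> X\<close> by (simp add: divide_simps mult_ac)
  finally show ?thesis
    by (simp add: p)
qed

lemma summable_if_le_decrements:
  fixes a R :: "nat \<Rightarrow> real"
  assumes "\<And>n. 0 \<le> a n" "\<And>n. a n \<le> R n - R (Suc n)" "\<And>n. 0 \<le> R n"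
  shows "summable a"
proof (rule bounded_imp_summable)
  fix n
  have "(\<Sum>k\<le>n. a k) \<le> (\<Sum>k<Suc n. R k - R (Suc k))"
    using assms(2) by (simp add: lessThan_Suc_atMost sum_mono)
  also have "\<dots> = R 0 - R (Suc n)"
    by (rule sum_lessThan_telescope')
  also have "\<dots> \<le> R 0"
    using assms(3) by simp
  finally show "(\<Sum>k\<le>n. a k) \<le> R 0" .
qed (use assms(1) in simp)

lemma filterlim_at_top_if_summable_exp_neg:
  fixes d :: "nat \<Rightarrow> real"
  assumes "summable (\<lambda>n. exp (- d n))"
  shows "filterlim d at_top sequentially"
  unfolding filterlim_at_top
proof
  fix Z :: real
  have "eventually (\<lambda>n. exp (- d n) < exp (- Z)) sequentially"
    using order_tendstoD(2)[OF summable_LIMSEQ_zero[OF assms], of "exp (- Z)"] by simp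
  then show "eventually (\<lambda>n. Z \<le> d n) sequentially"
    by (rule eventually_mono) simp
qed


theorem theorem1p5:
  fixes \<delta> :: real and f :: "nat \<Rightarrow> mob"
  assumes "0 < \<delta>" and "\<delta> < 1"
    and "\<And>n. n \<ge> 1 \<Longrightarrow> is_mobius (f n)"
    and "\<And>n. n \<ge> 1 \<Longrightarrow> maps_disc_into_disc (f n)"
    and "\<And>n. n \<ge> 1 \<Longrightarrow> disc_rad (mob_app (f n) ` ball 0 1) < \<delta>"
  shows "rapid_escape (\<lambda>n. comp_prod f (Suc n))"
proof -
  define F where "F = comp_prod f"
  define height where "height n = snd (poincare_ext (F n) jpt)" for n
  have F: "det (F n) \<noteq> 0" "0 < mob_disc_gap (F n)" for n
    using comp_prod_det_gap[OF assms(3,4)] by (auto simp: F_def)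
  have f: "is_mobius (f (Suc n))" "maps_disc_into_disc (f (Suc n))"
    "disc_rad (mob_app (f (Suc n)) ` ball 0 1) < \<delta>" for n
    using assms(3-5) by simp_all
  have "summable height"
  proof (rule summable_if_le_decrements)
    show "height n \<le> 2 / (1 - \<delta>) * mob_disc_radius (F n) - 2 / (1 - \<delta>) * mob_disc_radius (F (Suc n))" for n
      using height_le_radius_decrement[OF F(2) f assms(2)] by (simp add: height_def F_def)
  qed (use F assms(2) in \<open>auto simp: height_def less_imp_le snd_poincare_ext_jpt_pos mob_disc_radius_pos\<close>)
  then have "summable (\<lambda>n. 2 * height (Suc n))"
    by (simp add: summable_Suc_iff)
  then have "summable (\<lambda>n. exp (- hyp_dist jpt (poincare_ext (F (Suc n)) jpt)))"
  proof (rule summable_comparison_test'[where N = 0])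
    show "norm (exp (- hyp_dist jpt (poincare_ext (F (Suc n)) jpt))) \<le> 2 * height (Suc n)" for n
      unfolding height_def using F by (simp add: exp_neg_hyp_dist_jpt_le snd_poincare_ext_jpt_pos)
  qed
  then show ?thesis
    unfolding rapid_escape_def escaping_def F_def
    by (simp add: filterlim_at_top_if_summable_exp_neg)
qed

end
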